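(* Let $G$ be an execution graph, $T$ a thread, and $q$ such that the await iterations $q$ and $q+1$ of $T$ in $G$ exist. Then $\mathit{end}_G^T(q)<\mathit{start}_G^T(q+1)$.
   Context: Programs. There are finite sets $\mathit{Register}$, $\mathit{Value}$, $\mathit{Location}$; $\mathit{State}=\mathit{Register}\to\mathit{Value}$; an update is a partial map $\mathit{Register}\rightharpoonup\mathit{Value}$, and $(\sigma\ll\mu)(r)=\mu(r)$ if $r\in\mathrm{Dom}(\mu)$, else $\sigma(r)$. Events are reads $R^m(x)$, writes $W^m(x,v)$, fences $F^m$, error $E$. A program consists of finitely many threads $T$, each with a finite statement sequence $P_T(0),\dots,P_T(|P_T|-1)$. A statement is $\mathtt{step}(\epsilon,\delta)$ with $\epsilon:\mathit{State}\to\mathit{Event}$, $\delta:\mathit{State}\times(\mathit{Value}\cup\{\bot\})\to\mathit{Update}$, or $\mathtt{await}(n,\kappa)$ with $n\in\mathbb N$, $\kappa:\mathit{State}\to\{0,1\}$. Syntactic restriction: if $P_T(k)=\mathtt{await}(n,\cdot)$ then $n\le k$ and no $P_T(k')$ with $k'\in[k-n:k)$ is an await. ($[a:b)=\{a,\dots,b-1\}$.) An execution graph $G$ has a set $G.\mathrm E$ of triples $\langle T,t,e\rangle$ and a partial reads-from map $G.\mathrm{rf}$ from reads to writes. Thread-local semantics: $k_G^T(0)=0$, $\sigma_G^T(0)$ fixed; if $k_G^T(t)\ge|P_T|$ or no triple $\langle T,t,\cdot\rangle$ is in $G.\mathrm E$, execution stops ($N_G^T=t$). Otherwise with $S=P_T(k_G^T(t))$: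 $e_G^T(t)=\epsilon(\sigma_G^T(t))$ for $S=\mathtt{step}(\epsilon,\cdot)$, $F^{\mathrm{rlx}}$ for an await; $v_G^T(t)$ is the value of the write that $G.\mathrm{rf}$ assigns to $\langle T,t,e_G^T(t)\rangle$ if this is a read with defined rf, else $\bot$. For a step: $k_G^T(t+1)=k_G^T(t)+1$; if $e_G^T(t)$ is a read with $v_G^T(t)=\bot$ then $N_G^T=t+1$, $\sigma_G^T(t+1)=\sigma_G^T(t)$, else $\sigma_G^T(t+1)=\sigma_G^T(t)\ll\delta(\sigma_G^T(t),v_G^T(t))$. For $\mathtt{await}(n,\kappa)$: $\sigma_G^T(t+1)=\sigma_G^T(t)$ and $k_G^T(t+1)=k_G^T(t)+1$ if $\kappa(\sigma_G^T(t))=0$, else $k_G^T(t)-n$. Awaits: $\mathit{end}_G^T(0)<\mathit{end}_G^T(1)<\cdots$ enumerate the steps $t$ (with $t<N_G^T$) at which $P_T(k_G^T(t))$ is an await; $\mathit{len}_G^T(q)=n$ where $P_T(k_G^T(\mathit{end}_G^T(q)))=\mathtt{await}(n,\cdot)$; $\mathit{start}_G^T(q)=\mathit{end}_G^T(q)-\mathit{len}_G^T(q)$. *)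

theory Defs
  imports Main
begin

text \<open>Events: reads R^m(x), writes W^m(x,v), fences F^m, error E.
  The set of access modes is a type parameter 'm; the relaxed mode rlx is a parameter.\<close>
datatype ('m, 'l, 'v) event =
    Read 'm 'l
  | Write 'm 'l 'v
  | Fence 'm
  | Err

fun is_read :: "('m, 'l, 'v) event \<Rightarrow> bool" where
  "is_read (Read _ _) = True"
| "is_read _ = False"

type_synonym ('r, 'v) state = "'r \<Rightarrow> 'v"
type_synonym ('r, 'v) update = "'r \<Rightarrow> 'v option"

definition upd_state :: "('r, 'v) state \<Rightarrow> ('r, 'v) update \<Rightarrow> ('r, 'v) state" (infixl "\<lless>" 65) where
  "\<sigma> \<lless> \<mu> = (\<lambda>r. case \<mu> r of Some v \<Rightarrow> v | None \<Rightarrow> \<sigma> r)"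

text \<open>Statements: step(epsilon, delta) and await(n, kappa); the value bottom is None.\<close>
datatype ('r, 'v, 'm, 'l) stmt =
    Step "('r, 'v) state \<Rightarrow> ('m, 'l, 'v) event" "('r, 'v) state \<Rightarrow> 'v option \<Rightarrow> ('r, 'v) update"
  | Await nat "('r, 'v) state \<Rightarrow> bool"

fun is_await :: "('r, 'v, 'm, 'l) stmt \<Rightarrow> bool" where
  "is_await (Await _ _) = True"
| "is_await (Step _ _) = False"

type_synonym ('th, 'r, 'v, 'm, 'l) program = "'th \<Rightarrow> ('r, 'v, 'm, 'l) stmt list"

definition wf_program :: "('th, 'r, 'v, 'm, 'l) program \<Rightarrow> bool" where
  "wf_program P \<longleftrightarrow> (\<forall>T k n \<kappa>. k < length (P T) \<longrightarrow> P T ! k = Await n \<kappa> \<longrightarrow>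
      n \<le> k \<and> (\<forall>k' \<in> {k - n..<k}. \<not> is_await (P T ! k')))"

record ('th, 'm, 'l, 'v) exec_graph =
  events :: "('th \<times> nat \<times> ('m, 'l, 'v) event) set"
  rf :: "('th \<times> nat \<times> ('m, 'l, 'v) event) \<Rightarrow> ('th \<times> nat \<times> ('m, 'l, 'v) event) option"

fun write_val :: "('m, 'l, 'v) event \<Rightarrow> 'v option" where
  "write_val (Write _ _ v) = Some v"
| "write_val _ = None"

definition cur_event :: "'m \<Rightarrow> ('r, 'v, 'm, 'l) stmt \<Rightarrow> ('r, 'v) state \<Rightarrow> ('m, 'l, 'v) event" where
  "cur_event rlx S \<sigma> = (case S of Step \<epsilon> \<delta> \<Rightarrow> \<epsilon> \<sigma> | Await n \<kappa> \<Rightarrow> Fence rlx)"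

definition read_val :: "('th, 'm, 'l, 'v, 'z) exec_graph_scheme \<Rightarrow> 'th \<Rightarrow> nat \<Rightarrow> ('m, 'l, 'v) event \<Rightarrow> 'v option" where
  "read_val G T t e = (if is_read e then (case rf G (T, t, e) of Some (_, _, w) \<Rightarrow> write_val w | None \<Rightarrow> None) else None)"

definition active :: "('th, 'r, 'v, 'm, 'l) program \<Rightarrow> ('th, 'm, 'l, 'v, 'z) exec_graph_scheme \<Rightarrow> 'th \<Rightarrow> nat \<Rightarrow> nat \<Rightarrow> bool" where
  "active P G T t k \<longleftrightarrow> k < length (P T) \<and> (\<exists>e. (T, t, e) \<in> events G)"

text \<open>Thread-local configuration at step t: (k_G^T(t), sigma_G^T(t), not-yet-stopped).\<close>
primrec cfg :: "'m \<Rightarrow> ('th, 'r, 'v, 'm, 'l) program \<Rightarrow> ('th \<Rightarrow> ('r, 'v) state) \<Rightarrow>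
    ('th, 'm, 'l, 'v, 'z) exec_graph_scheme \<Rightarrow> 'th \<Rightarrow> nat \<Rightarrow> nat \<times> ('r, 'v) state \<times> bool" where
  "cfg rlx P \<sigma>0 G T 0 = (0, \<sigma>0 T, True)"
| "cfg rlx P \<sigma>0 G T (Suc t) =
    (case cfg rlx P \<sigma>0 G T t of (k, \<sigma>, alive) \<Rightarrow>
      if \<not> alive \<or> \<not> active P G T t k then (k, \<sigma>, False)
      else (case P T ! k of
              Step \<epsilon> \<delta> \<Rightarrow>
                (let e = \<epsilon> \<sigma>; v = read_val G T t e in
                 if is_read e \<and> v = None then (k + 1, \<sigma>, False)
                 else (k + 1, \<sigma> \<lless> \<delta> \<sigma> v, True))
            | Await n \<kappa> \<Rightarrow> (if \<kappa> \<sigma> then (k - n, \<sigma>, True) else (k + 1, \<sigma>, True))))"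

definition pc :: "'m \<Rightarrow> ('th, 'r, 'v, 'm, 'l) program \<Rightarrow> ('th \<Rightarrow> ('r, 'v) state) \<Rightarrow>
    ('th, 'm, 'l, 'v, 'z) exec_graph_scheme \<Rightarrow> 'th \<Rightarrow> nat \<Rightarrow> nat" where
  "pc rlx P \<sigma>0 G T t = fst (cfg rlx P \<sigma>0 G T t)"

text \<open>t < N_G^T: step t is actually executed by thread T.\<close>
definition running :: "'m \<Rightarrow> ('th, 'r, 'v, 'm, 'l) program \<Rightarrow> ('th \<Rightarrow> ('r, 'v) state) \<Rightarrow>
    ('th, 'm, 'l, 'v, 'z) exec_graph_scheme \<Rightarrow> 'th \<Rightarrow> nat \<Rightarrow> bool" where
  "running rlx P \<sigma>0 G T t \<longleftrightarrow> snd (snd (cfg rlx P \<sigma>0 G T t)) \<and> active P G T t (pc rlx P \<sigma>0 G T t)"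

definition await_step :: "'m \<Rightarrow> ('th, 'r, 'v, 'm, 'l) program \<Rightarrow> ('th \<Rightarrow> ('r, 'v) state) \<Rightarrow>
    ('th, 'm, 'l, 'v, 'z) exec_graph_scheme \<Rightarrow> 'th \<Rightarrow> nat \<Rightarrow> bool" where
  "await_step rlx P \<sigma>0 G T t \<longleftrightarrow> running rlx P \<sigma>0 G T t \<and> is_await (P T ! pc rlx P \<sigma>0 G T t)"

text \<open>t is the q-th await step (0-based): end_G^T(q) = t.\<close>
definition is_end :: "'m \<Rightarrow> ('th, 'r, 'v, 'm, 'l) program \<Rightarrow> ('th \<Rightarrow> ('r, 'v) state) \<Rightarrow>
    ('th, 'm, 'l, 'v, 'z) exec_graph_scheme \<Rightarrow> 'th \<Rightarrow> nat \<Rightarrow> nat \<Rightarrow> bool" where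
  "is_end rlx P \<sigma>0 G T q t \<longleftrightarrow> await_step rlx P \<sigma>0 G T t \<and>
      card {t'. t' < t \<and> await_step rlx P \<sigma>0 G T t'} = q"

definition await_exists :: "'m \<Rightarrow> ('th, 'r, 'v, 'm, 'l) program \<Rightarrow> ('th \<Rightarrow> ('r, 'v) state) \<Rightarrow>
    ('th, 'm, 'l, 'v, 'z) exec_graph_scheme \<Rightarrow> 'th \<Rightarrow> nat \<Rightarrow> bool" where
  "await_exists rlx P \<sigma>0 G T q \<longleftrightarrow> (\<exists>t. is_end rlx P \<sigma>0 G T q t)"

definition end_aw :: "'m \<Rightarrow> ('th, 'r, 'v, 'm, 'l) program \<Rightarrow> ('th \<Rightarrow> ('r, 'v) state) \<Rightarrow>
    ('th, 'm, 'l, 'v, 'z) exec_graph_scheme \<Rightarrow> 'th \<Rightarrow> nat \<Rightarrow> nat" where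
  "end_aw rlx P \<sigma>0 G T q = (THE t. is_end rlx P \<sigma>0 G T q t)"

fun await_len :: "('r, 'v, 'm, 'l) stmt \<Rightarrow> nat" where
  "await_len (Await n _) = n"
| "await_len (Step _ _) = 0"

definition len_aw :: "'m \<Rightarrow> ('th, 'r, 'v, 'm, 'l) program \<Rightarrow> ('th \<Rightarrow> ('r, 'v) state) \<Rightarrow>
    ('th, 'm, 'l, 'v, 'z) exec_graph_scheme \<Rightarrow> 'th \<Rightarrow> nat \<Rightarrow> nat" where
  "len_aw rlx P \<sigma>0 G T q = await_len (P T ! pc rlx P \<sigma>0 G T (end_aw rlx P \<sigma>0 G T q))"

definition start_aw :: "'m \<Rightarrow> ('th, 'r, 'v, 'm, 'l) program \<Rightarrow> ('th \<Rightarrow> ('r, 'v) state) \<Rightarrow>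
    ('th, 'm, 'l, 'v, 'z) exec_graph_scheme \<Rightarrow> 'th \<Rightarrow> nat \<Rightarrow> nat" where
  "start_aw rlx P \<sigma>0 G T q = end_aw rlx P \<sigma>0 G T q - len_aw rlx P \<sigma>0 G T q"

end

theory Submission
  imports Defs
begin

text \<open>Between two consecutive await iterations only straight-line steps are executed, so the
  program counter advances by one per step. The iteration q leaves its await either forwards
  or by jumping back to the start of its own loop body; in both cases the syntactic restriction
  (no await inside a loop body, and bodies fit before their await) forces at least
  len(q+1) straight-line steps before the await of iteration q+1 is reached.\<close>

lemma wf_program_await_below:
  assumes "wf_program P" "k < length (P T)" "P T ! k = Await n \<kappa>"
    and "is_await (P T ! k')" "k' < k"
  shows "k' < k - n"
  using assms unfolding wf_program_def by (metis atLeastLessThan_iff not_le)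

text \<open>Here j is the program counter right after the await at k1 has been executed, and d counts
  the straight-line statements passed on the way from j to the await at k2.\<close>

lemma wf_program_await_gap:
  assumes wf: "wf_program P"
    and k1: "k1 < length (P T)" "P T ! k1 = Await n1 \<kappa>1"
    and k2: "k2 < length (P T)" "P T ! k2 = Await n2 \<kappa>2"
    and "k2 = j + d" and j: "j = Suc k1 \<or> j = k1 - n1"
  shows "n2 \<le> d"
proof (rule ccontr)
  assume "\<not> n2 \<le> d"
  have "n1 \<le> k1" using wf k1 unfolding wf_program_def by blast
  from j show False
  proof
    assume "j = Suc k1"
    then show False
      using wf_program_await_below[OF wf k2, of k1] k1 \<open>k2 = j + d\<close> \<open>\<not> n2 \<le> d\<close> by simp
  next
    assume "j = k1 - n1"
    consider "k2 < k1" | "k2 = k1" | "k1 < k2" by linarith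
    then show False
    proof cases
      case 1
      then show False
        using wf_program_await_below[OF wf k1, of k2] k2 \<open>k2 = j + d\<close> \<open>j = k1 - n1\<close> by simp
    next
      case 2
      then show False
        using k1 k2 \<open>k2 = j + d\<close> \<open>j = k1 - n1\<close> \<open>n1 \<le> k1\<close> \<open>\<not> n2 \<le> d\<close> by simp
    next
      case 3
      then show False
        using wf_program_await_below[OF wf k2, of k1] k1 \<open>k2 = j + d\<close> \<open>j = k1 - n1\<close>
          \<open>\<not> n2 \<le> d\<close> by simp
    qed
  qed
qed

lemma running_Suc_imp_running:
  assumes "running rlx P \<sigma>0 G T (Suc t)"
  shows "running rlx P \<sigma>0 G T t"
proof -
  obtain k \<sigma> alive where "cfg rlx P \<sigma>0 G T t = (k, \<sigma>, alive)" by (metis prod.exhaust)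
  then show ?thesis
    using assms by (auto simp: running_def pc_def Let_def split: stmt.splits if_splits)
qed

lemma pc_Suc_not_await:
  assumes "running rlx P \<sigma>0 G T t" "\<not> is_await (P T ! pc rlx P \<sigma>0 G T t)"
  shows "pc rlx P \<sigma>0 G T (Suc t) = Suc (pc rlx P \<sigma>0 G T t)"
proof -
  obtain k \<sigma> alive where "cfg rlx P \<sigma>0 G T t = (k, \<sigma>, alive)" by (metis prod.exhaust)
  then show ?thesis
    using assms by (auto simp: running_def pc_def Let_def split: stmt.splits)
qed

lemma pc_Suc_await:
  assumes "running rlx P \<sigma>0 G T t" "P T ! pc rlx P \<sigma>0 G T t = Await n \<kappa>"
  shows "pc rlx P \<sigma>0 G T (Suc t) = Suc (pc rlx P \<sigma>0 G T t) \<or>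
    pc rlx P \<sigma>0 G T (Suc t) = pc rlx P \<sigma>0 G T t - n"
proof -
  obtain k \<sigma> alive where "cfg rlx P \<sigma>0 G T t = (k, \<sigma>, alive)" by (metis prod.exhaust)
  then show ?thesis
    using assms by (auto simp: running_def pc_def)
qed

lemma pc_add_if_no_await_step:
  assumes "running rlx P \<sigma>0 G T (t + d)" "\<And>i. i < d \<Longrightarrow> \<not> await_step rlx P \<sigma>0 G T (t + i)"
  shows "pc rlx P \<sigma>0 G T (t + d) = pc rlx P \<sigma>0 G T t + d"
  using assms
proof (induction d)
  case 0
  then show ?case by simp
next
  case (Suc d)
  have running: "running rlx P \<sigma>0 G T (t + d)"
    using Suc.prems(1) running_Suc_imp_running by simp
  then have "\<not> is_await (P T ! pc rlx P \<sigma>0 G T (t + d))"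
    using Suc.prems(2) by (simp add: await_step_def)
  then have "pc rlx P \<sigma>0 G T (Suc (t + d)) = Suc (pc rlx P \<sigma>0 G T (t + d))"
    by (rule pc_Suc_not_await[OF running])
  then show ?case
    using Suc.IH running Suc.prems(2) by simp
qed

lemma card_Collect_less_mono:
  fixes a b :: nat
  assumes "a \<le> b"
  shows "card {t. t < a \<and> Q t} \<le> card {t. t < b \<and> Q t}"
  using assms by (intro card_mono) auto

lemma card_Collect_less_strict_mono:
  fixes a b :: nat
  assumes "a < b" "Q a"
  shows "card {t. t < a \<and> Q t} < card {t. t < b \<and> Q t}"
  using assms by (intro psubset_card_mono) auto

lemma is_end_unique:
  assumes "is_end rlx P \<sigma>0 G T q t" "is_end rlx P \<sigma>0 G T q t'"
  shows "t = t'"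
  using assms card_Collect_less_strict_mono[of t t' "await_step rlx P \<sigma>0 G T"]
    card_Collect_less_strict_mono[of t' t "await_step rlx P \<sigma>0 G T"]
  unfolding is_end_def by (metis less_irrefl linorder_neqE_nat)

lemma end_aw_eqI:
  assumes "is_end rlx P \<sigma>0 G T q t"
  shows "end_aw rlx P \<sigma>0 G T q = t"
  unfolding end_aw_def using assms is_end_unique by (metis the_equality)

lemma is_end_Suc_less:
  assumes "is_end rlx P \<sigma>0 G T q t1" "is_end rlx P \<sigma>0 G T (Suc q) t2"
  shows "t1 < t2"
  using assms card_Collect_less_mono[of t2 t1 "await_step rlx P \<sigma>0 G T"]
  unfolding is_end_def by (metis Suc_n_not_le_n not_less)

lemma not_await_step_between_ends:
  assumes "is_end rlx P \<sigma>0 G T q t1" "is_end rlx P \<sigma>0 G T (Suc q) t2" "t1 < t" "t < t2"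
  shows "\<not> await_step rlx P \<sigma>0 G T t"
proof
  assume "await_step rlx P \<sigma>0 G T t"
  then show False
    using assms card_Collect_less_strict_mono[of t1 t "await_step rlx P \<sigma>0 G T"]
      card_Collect_less_strict_mono[of t t2 "await_step rlx P \<sigma>0 G T"]
    unfolding is_end_def by simp
qed

lemma pc_at_next_end:
  assumes "is_end rlx P \<sigma>0 G T q t1" "is_end rlx P \<sigma>0 G T (Suc q) t2"
  shows "pc rlx P \<sigma>0 G T t2 = pc rlx P \<sigma>0 G T (Suc t1) + (t2 - Suc t1)"
proof -
  have "t2 = Suc t1 + (t2 - Suc t1)"
    using is_end_Suc_less[OF assms] by simp
  moreover have "running rlx P \<sigma>0 G T t2"
    using assms(2) by (simp add: is_end_def await_step_def)
  ultimately show ?thesis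
    using pc_add_if_no_await_step[of rlx P \<sigma>0 G T "Suc t1" "t2 - Suc t1"]
      not_await_step_between_ends[OF assms] by simp
qed

lemma is_end_await:
  assumes "is_end rlx P \<sigma>0 G T q t"
  obtains n \<kappa> where "running rlx P \<sigma>0 G T t" "pc rlx P \<sigma>0 G T t < length (P T)"
    "P T ! pc rlx P \<sigma>0 G T t = Await n \<kappa>"
  using assms unfolding is_end_def await_step_def running_def active_def
  by (metis is_await.elims(2))

theorem lemma3:
  fixes rlx :: 'm
    and P :: "('th::finite, 'r::finite, 'v::finite, 'm, 'l::finite) program"
    and \<sigma>0 :: "'th \<Rightarrow> ('r, 'v) state"
    and G :: "('th, 'm, 'l, 'v) exec_graph"
    and T :: 'th and q :: nat
  assumes "wf_program P"
    and "await_exists rlx P \<sigma>0 G T q"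
    and "await_exists rlx P \<sigma>0 G T (Suc q)"
  shows "end_aw rlx P \<sigma>0 G T q < start_aw rlx P \<sigma>0 G T (Suc q)"
proof -
  let ?pc = "pc rlx P \<sigma>0 G T"
  obtain t1 t2 where end1: "is_end rlx P \<sigma>0 G T q t1" and end2: "is_end rlx P \<sigma>0 G T (Suc q) t2"
    using assms(2,3) unfolding await_exists_def by blast
  obtain n1 \<kappa>1 where aw1: "running rlx P \<sigma>0 G T t1" "?pc t1 < length (P T)"
    "P T ! ?pc t1 = Await n1 \<kappa>1"
    using end1 by (rule is_end_await)
  obtain n2 \<kappa>2 where aw2: "?pc t2 < length (P T)" "P T ! ?pc t2 = Await n2 \<kappa>2"
    using end2 by (rule is_end_await)
  have "n2 \<le> t2 - Suc t1"
    using wf_program_await_gap[OF assms(1) aw1(2,3) aw2 pc_at_next_end[OF end1 end2]]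
      pc_Suc_await[OF aw1(1,3)] by blast
  then have "t1 < t2 - n2"
    using is_end_Suc_less[OF end1 end2] by linarith
  then show ?thesis
    unfolding start_aw_def len_aw_def end_aw_eqI[OF end1] end_aw_eqI[OF end2] using aw2 by simp
qed

end
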